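(* Let $p,q$ be distributions on $\mathbb{R}$ and $\epsilon\in[0,1)$ such that $\sup_{t\in\mathbb{R}}|\mathbb{P}_{X\sim p}(X\ge t)-\mathbb{P}_{Y\sim q}(Y\ge t)|\le\epsilon$. Then there exist distributions $r_p\le\frac{p}{1-\epsilon}$ and $r_q\le\frac{q}{1-\epsilon}$ such that $r_p$ is stochastically dominated by $r_q$ (i.e. $\mathbb{P}_{r_p}(X\le t)\ge\mathbb{P}_{r_q}(X\le t)$ for all $t$); in particular $\mathbb{E}_{r_p}[X]\le\mathbb{E}_{r_q}[X]$ whenever these expectations exist.
   Context: For distributions $r,p$ and $\epsilon\in[0,1)$, $r\le\frac{p}{1-\epsilon}$ means $r$ is a probability distribution with $r(A)\le p(A)/(1-\epsilon)$ for all measurable $A$. *)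

theory Defs
  imports "HOL-Probability.Probability"
begin

definition real_distr :: "real measure \<Rightarrow> bool" where
  "real_distr M \<longleftrightarrow> prob_space M \<and> sets M = sets borel"

definition scaled_le :: "real measure \<Rightarrow> real measure \<Rightarrow> real \<Rightarrow> bool" where
  "scaled_le r p eps \<longleftrightarrow> real_distr r \<and>
     (\<forall>A \<in> sets borel. measure r A \<le> measure p A / (1 - eps))"

end

theory Submission
  imports Defs
begin

text \<open>With d = 1 - eps, rp keeps the lowest mass d of p and rq the highest mass d of q,
splitting the atom at the respective quantile if necessary, both rescaled by 1/d. Then
rp{..<t} = min(p{..<t}, d)/d and rq{t..} = min(q{t..}, d)/d, so the tail bound
p{t..} - q{t..} \<le> eps, i.e. p{..<t} + q{t..} \<ge> d, says exactly rq{..<t} \<le> rp{..<t}.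
Right limits turn this into the comparison of distribution functions, and the layer-cake formula
turns stochastic dominance into the order of the means.\<close>

lemma nn_integral_layer_cake:
  fixes f :: "'a \<Rightarrow> real"
  assumes "sigma_finite_measure M" and f[measurable]: "f \<in> borel_measurable M"
  shows "(\<integral>\<^sup>+x. ennreal (f x) \<partial>M) =
    (\<integral>\<^sup>+t. indicator {0..} t * emeasure M {x \<in> space M. t < f x} \<partial>lborel)"
proof -
  interpret pair_sigma_finite M lborel
    using assms(1) by (simp add: pair_sigma_finite_def lborel.sigma_finite_measure_axioms)
  have "(\<lambda>(x, t). indicator {0..<f x} t :: ennreal) = (\<lambda>(x, t). if 0 \<le> t \<and> t < f x then 1 else 0)"
    by (auto simp: indicator_def fun_eq_iff)
  then have meas: "(\<lambda>(x, t). indicator {0..<f x} t :: ennreal) \<in> borel_measurable (M \<Otimes>\<^sub>M lborel)"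
    by simp
  have "(\<integral>\<^sup>+x. ennreal (f x) \<partial>M) = (\<integral>\<^sup>+x. (\<integral>\<^sup>+t. indicator {0..<f x} t \<partial>lborel) \<partial>M)"
  proof (rule nn_integral_cong)
    fix x
    show "ennreal (f x) = (\<integral>\<^sup>+t. indicator {0..<f x} t \<partial>lborel)"
      by (cases "0 \<le> f x") (auto simp: ennreal_neg)
  qed
  also have "\<dots> = (\<integral>\<^sup>+t. (\<integral>\<^sup>+x. indicator {0..<f x} t \<partial>M) \<partial>lborel)"
    by (rule Fubini'[OF meas, symmetric])
  also have "\<dots> = (\<integral>\<^sup>+t. indicator {0..} t * emeasure M {x \<in> space M. t < f x} \<partial>lborel)"
  proof (intro nn_integral_cong)
    fix t
    have "(\<integral>\<^sup>+x. indicator {0..<f x} t \<partial>M) =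
        (\<integral>\<^sup>+x. indicator {0..} t * indicator {x \<in> space M. t < f x} x \<partial>M)"
      by (intro nn_integral_cong) (auto simp: indicator_def)
    then show "(\<integral>\<^sup>+x. indicator {0..<f x} t \<partial>M) = indicator {0..} t * emeasure M {x \<in> space M. t < f x}"
      by (simp add: nn_integral_cmult_indicator)
  qed
  finally show ?thesis .
qed

lemma nn_integral_mono_tail:
  fixes f :: "'a \<Rightarrow> real"
  assumes "sigma_finite_measure M" "sigma_finite_measure N"
    and "f \<in> borel_measurable M" "f \<in> borel_measurable N"
    and "\<And>t. 0 \<le> t \<Longrightarrow> emeasure M {x \<in> space M. t < f x} \<le> emeasure N {x \<in> space N. t < f x}"
  shows "(\<integral>\<^sup>+x. ennreal (f x) \<partial>M) \<le> (\<integral>\<^sup>+x. ennreal (f x) \<partial>N)"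
  unfolding nn_integral_layer_cake[OF assms(1,3)] nn_integral_layer_cake[OF assms(2,4)]
  by (intro nn_integral_mono) (auto simp: indicator_def assms(5))

lemma (in finite_borel_measure) measure_lessThan_tendsto_atMost:
  "((\<lambda>s. measure M {..<s}) \<longlongrightarrow> measure M {..t}) (at_right t)"
proof (rule tendsto_sandwich)
  show "\<forall>\<^sub>F s in at_right t. measure M {..t} \<le> measure M {..<s}"
    by (rule eventually_at_rightI[of t "t + 1"]) (auto intro!: finite_measure_mono)
  show "\<forall>\<^sub>F s in at_right t. measure M {..<s} \<le> cdf M s"
    unfolding cdf_def2 by (auto intro!: always_eventually finite_measure_mono)
  show "(cdf M \<longlongrightarrow> measure M {..t}) (at_right t)"
    using cdf_is_right_cont by (simp add: continuous_within cdf_def2)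
qed simp

lemma atMost_le_iff_lessThan_le:
  assumes "finite_borel_measure M" "finite_borel_measure N"
  shows "(\<forall>t. measure N {..t} \<le> measure M {..t}) \<longleftrightarrow> (\<forall>t. measure N {..<t} \<le> measure M {..<t})"
proof safe
  fix t assume "\<forall>t. measure N {..t} \<le> measure M {..t}"
  then show "measure N {..<t} \<le> measure M {..<t}"
    using assms by (intro tendsto_le[OF _ finite_borel_measure.cdf_at_left finite_borel_measure.cdf_at_left])
      (auto simp: cdf_def2)
next
  fix t assume "\<forall>t. measure N {..<t} \<le> measure M {..<t}"
  then show "measure N {..t} \<le> measure M {..t}"
    using assms by (intro tendsto_le[OF _ finite_borel_measure.measure_lessThan_tendsto_atMost
          finite_borel_measure.measure_lessThan_tendsto_atMost]) auto
qed

lemma integral_mono_stochastic_dominance: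
  assumes "real_distribution M" "real_distribution N"
    and dom: "\<And>t. measure N {..t} \<le> measure M {..t}"
    and "integrable M (\<lambda>x. x)" "integrable N (\<lambda>x. x)"
  shows "(\<integral>x. x \<partial>M) \<le> (\<integral>x. x \<partial>N)"
proof -
  interpret M: real_distribution M by fact
  interpret N: real_distribution N by fact
  have dom_lessThan: "measure N {..<t} \<le> measure M {..<t}" for t
    using atMost_le_iff_lessThan_le[of M N] dom M.finite_borel_measure_axioms N.finite_borel_measure_axioms
    by blast
  have pos: "(\<integral>\<^sup>+x. ennreal x \<partial>M) \<le> (\<integral>\<^sup>+x. ennreal x \<partial>N)"
  proof (rule nn_integral_mono_tail)
    fix t :: real
    have "{x. t < x} = space M - {..t}" "{x. t < x} = space N - {..t}"
      by auto
    then show "emeasure M {x \<in> space M. t < x} \<le> emeasure N {x \<in> space N. t < x}"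
      using dom[of t] M.prob_compl[of "{..t}"] N.prob_compl[of "{..t}"]
      by (simp add: M.emeasure_eq_measure N.emeasure_eq_measure)
  qed (simp_all add: M.sigma_finite_measure_axioms N.sigma_finite_measure_axioms)
  have neg: "(\<integral>\<^sup>+x. ennreal (- x) \<partial>N) \<le> (\<integral>\<^sup>+x. ennreal (- x) \<partial>M)"
  proof (rule nn_integral_mono_tail)
    fix t :: real
    have "{x. t < - x} = {..< -t}"
      by auto
    then show "emeasure N {x \<in> space N. t < - x} \<le> emeasure M {x \<in> space M. t < - x}"
      using dom_lessThan[of "-t"] by (simp add: M.emeasure_eq_measure N.emeasure_eq_measure)
  qed (simp_all add: M.sigma_finite_measure_axioms N.sigma_finite_measure_axioms)
  have fin: "(\<integral>\<^sup>+x. ennreal x \<partial>N) \<noteq> \<infinity>" "(\<integral>\<^sup>+x. ennreal (- x) \<partial>M) \<noteq> \<infinity>"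
    using assms(4,5) unfolding real_integrable_def by blast+
  show ?thesis
    unfolding real_lebesgue_integral_def[OF assms(4)] real_lebesgue_integral_def[OF assms(5)]
    using enn2real_mono[OF pos] enn2real_mono[OF neg] fin by (simp add: less_top)
qed

lemma (in real_distribution) quantile_exists:
  assumes "0 < d" "d < 1"
  obtains a where "measure M {..<a} \<le> d" "d \<le> measure M {..a}"
proof
  define S where "S = {x. d \<le> cdf M x}"
  define a where "a = Inf S"
  have "\<forall>\<^sub>F x in at_top. d < cdf M x"
    using cdf_lim_at_top_prob assms(2) by (simp add: order_tendsto_iff)
  then obtain x0 where "x0 \<in> S"
    unfolding S_def by (metis (mono_tags) eventually_at_top_linorder less_imp_le mem_Collect_eq order_refl)
  have "\<forall>\<^sub>F x in at_bot. cdf M x < d"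
    using cdf_lim_at_bot assms(1) by (simp add: order_tendsto_iff)
  then obtain b where "\<And>x. x \<le> b \<Longrightarrow> cdf M x < d"
    by (auto simp: eventually_at_bot_linorder)
  then have "bdd_below S"
    unfolding S_def bdd_below_def by (metis linorder_not_less mem_Collect_eq nless_le)
  have below: "cdf M x \<le> d" if x: "x < a" for x
    using cInf_lower[OF _ \<open>bdd_below S\<close>, of x] x by (force simp: S_def a_def)
  have above: "d \<le> cdf M x" if x: "a < x" for x
  proof -
    obtain s where "s \<in> S" "s < x"
      using cInf_lessD[of S x] \<open>x0 \<in> S\<close> x by (auto simp: a_def)
    then show ?thesis
      using cdf_nondecreasing[of s x] by (simp add: S_def)
  qed
  have "\<forall>\<^sub>F x in at_left a. cdf M x \<le> d"
    by (rule eventually_at_leftI[of "a - 1"]) (auto intro: below)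
  with cdf_at_left show "measure M {..<a} \<le> d"
    by (rule tendsto_upperbound) simp
  have "\<forall>\<^sub>F x in at_right a. d \<le> cdf M x"
    by (rule eventually_at_rightI[of a "a + 1"]) (auto intro: above)
  with cdf_is_right_cont show "d \<le> measure M {..a}"
    unfolding continuous_within cdf_def2[symmetric] by (rule tendsto_lowerbound) simp
qed

lemma (in finite_measure) emeasure_density_indicator_lincomb:
  assumes "A \<in> sets M" "B \<in> sets M" "C \<in> sets M" "0 \<le> b" "0 \<le> c"
  shows "emeasure (density M (\<lambda>x. ennreal (b * indicator B x + c * indicator C x))) A =
    ennreal (b * measure M (A \<inter> B) + c * measure M (A \<inter> C))"
proof -
  have "emeasure (density M (\<lambda>x. ennreal (b * indicator B x + c * indicator C x))) A =
      (\<integral>\<^sup>+x. ennreal b * indicator (A \<inter> B) x + ennreal c * indicator (A \<inter> C) x \<partial>M)"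
    using assms by (subst emeasure_density) (auto intro!: nn_integral_cong simp: indicator_def)
  also have "\<dots> = ennreal b * emeasure M (A \<inter> B) + ennreal c * emeasure M (A \<inter> C)"
    using assms by (simp add: nn_integral_add nn_integral_cmult_indicator)
  finally show ?thesis
    using assms by (simp add: emeasure_eq_measure ennreal_mult[symmetric])
qed

lemma (in real_distribution) lower_truncation_at:
  assumes "0 < d" "0 \<le> c" "c \<le> 1" "measure M {..<a} + c * measure M {a} = d"
  obtains r where "real_distribution r"
    "\<And>A. A \<in> sets borel \<Longrightarrow> measure r A = (measure M (A \<inter> {..<a}) + c * measure M (A \<inter> {a})) / d"
    "\<And>A. A \<in> sets borel \<Longrightarrow> measure r A \<le> measure M A / d"
proof -
  define r where "r = density M (\<lambda>x. ennreal (1/d * indicator {..<a} x + c/d * indicator {a} x))"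
  have emeasure_r: "emeasure r A = ennreal ((measure M (A \<inter> {..<a}) + c * measure M (A \<inter> {a})) / d)"
    if "A \<in> sets borel" for A
    using that assms unfolding r_def
    by (subst emeasure_density_indicator_lincomb) (auto simp: add_divide_distrib)
  then have measure_r: "measure r A = (measure M (A \<inter> {..<a}) + c * measure M (A \<inter> {a})) / d"
    if "A \<in> sets borel" for A
    using that assms by (simp add: measure_def)
  have "real_distribution r"
    unfolding real_distribution_def real_distribution_axioms_def
  proof
    show "prob_space r"
      using emeasure_r[of UNIV] assms by (intro prob_spaceI) (simp add: r_def)
  qed (simp add: r_def)
  moreover have "measure r A \<le> measure M A / d" if A: "A \<in> sets borel" for A
  proof -
    have "measure M (A \<inter> {..<a}) + c * measure M (A \<inter> {a}) \<le> measure M (A \<inter> {..<a}) + measure M (A \<inter> {a})"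
      using assms by (intro add_left_mono mult_left_le_one_le) auto
    also have "\<dots> = measure M ((A \<inter> {..<a}) \<union> (A \<inter> {a}))"
      using A by (intro finite_measure_Union[symmetric]) auto
    also have "\<dots> \<le> measure M A"
      using A by (intro finite_measure_mono) auto
    finally show ?thesis
      using measure_r[OF A] assms by (simp add: divide_right_mono)
  qed
  ultimately show ?thesis
    using that measure_r by blast
qed

lemma (in real_distribution) lower_truncation:
  assumes "0 < d" "d \<le> 1"
  obtains r where "real_distribution r" "\<And>A. A \<in> sets borel \<Longrightarrow> measure r A \<le> measure M A / d"
    "\<And>t. measure r {..t} = min (measure M {..t}) d / d"
    "\<And>t. measure r {..<t} = min (measure M {..<t}) d / d"
proof (cases "d = 1")
  case True
  show ?thesis
  proof (rule that[of M])
    show "measure M {..t} = min (measure M {..t}) d / d" "measure M {..<t} = min (measure M {..<t}) d / d" for t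
      using True prob_le_1 by (simp_all add: min_absorb1)
  qed (use True real_distribution_axioms in simp_all)
next
  case False
  with assms have "d < 1"
    by simp
  then obtain a where le_a: "measure M {..<a} \<le> d" "d \<le> measure M {..a}"
    using quantile_exists assms(1) by blast
  have split_a: "measure M {..a} = measure M {..<a} + measure M {a}"
    using finite_measure_Union[of "{..<a}" "{a}"] by (simp add: ivl_disj_un_singleton(2)[symmetric])
  \<comment> \<open>If the atom at a is null, c is the junk value 0; harmless, as then the mass below a is exactly d.\<close>
  define c where "c = (d - measure M {..<a}) / measure M {a}"
  have c: "0 \<le> c" "c \<le> 1"
    using le_a split_a measure_nonneg[of M "{a}"] by (simp_all add: c_def divide_le_eq)
  have mass_c: "measure M {..<a} + c * measure M {a} = d"
    using le_a split_a by (cases "measure M {a} = 0") (simp_all add: c_def)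
  obtain r where r: "real_distribution r" "\<And>A. A \<in> sets borel \<Longrightarrow> measure r A \<le> measure M A / d"
    "\<And>A. A \<in> sets borel \<Longrightarrow> measure r A = (measure M (A \<inter> {..<a}) + c * measure M (A \<inter> {a})) / d"
    using lower_truncation_at[OF assms(1) c mass_c] by metis
  have measure_r_down: "measure r T = min (measure M T) d / d"
    if "T \<in> sets borel" "{..a} \<subseteq> T \<or> T \<subseteq> {..<a}" for T
    using that(2)
  proof
    assume "{..a} \<subseteq> T"
    then have "d \<le> measure M T" "T \<inter> {..<a} = {..<a}" "T \<inter> {a} = {a}"
      using le_a finite_measure_mono[of "{..a}" T] that(1) by auto
    then show ?thesis
      using r(3)[OF that(1)] mass_c assms by simp
  next
    assume "T \<subseteq> {..<a}"
    then have "measure M T \<le> d" "T \<inter> {..<a} = T" "T \<inter> {a} = {}"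
      using le_a finite_measure_mono[of T "{..<a}"] by auto
    then show ?thesis
      using r(3)[OF that(1)] by simp
  qed
  show ?thesis
  proof (rule that[OF r(1,2)])
    show "measure r {..t} = min (measure M {..t}) d / d" for t
      by (rule measure_r_down) auto
    show "measure r {..<t} = min (measure M {..<t}) d / d" for t
      by (rule measure_r_down) auto
  qed
qed

lemma measure_distr_uminus:
  fixes K :: "real measure"
  assumes "sets K = sets borel" "A \<in> sets borel"
  shows "measure (distr K borel uminus) A = measure K (uminus ` A)"
proof -
  have "uminus -` A = uminus ` A"
    by force
  then show ?thesis
    using assms sets_eq_imp_space_eq[OF assms(1)] by (subst measure_distr) auto
qed

lemma (in real_distribution) upper_truncation:
  assumes "0 < d" "d \<le> 1"
  obtains r where "real_distribution r" "\<And>A. A \<in> sets borel \<Longrightarrow> measure r A \<le> measure M A / d"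
    "\<And>t. measure r {t..} = min (measure M {t..}) d / d"
proof -
  define M' where "M' = distr M borel uminus"
  interpret M': real_distribution M'
    unfolding M'_def by (intro real_distribution_distr) simp
  obtain r' where r': "real_distribution r'" "\<And>A. A \<in> sets borel \<Longrightarrow> measure r' A \<le> measure M' A / d"
    "\<And>t. measure r' {..t} = min (measure M' {..t}) d / d"
    using M'.lower_truncation[OF assms] by metis
  interpret r': real_distribution r'
    by fact
  define r where "r = distr r' borel uminus"
  have measure_M': "measure M' A = measure M (uminus ` A)" if "A \<in> sets borel" for A
    using that by (simp add: M'_def measure_distr_uminus)
  have measure_r: "measure r A = measure r' (uminus ` A)" if "A \<in> sets borel" for A
    using that by (simp add: r_def measure_distr_uminus)
  have uminus_borel: "uminus ` A \<in> sets borel" if "A \<in> sets borel" for A :: "real set"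
  proof -
    have "uminus ` A = uminus -` A \<inter> space borel"
      by force
    then show ?thesis
      using measurable_sets_borel[OF borel_measurable_uminus[OF measurable_ident] that] by simp
  qed
  show ?thesis
  proof (rule that)
    show "real_distribution r"
      unfolding r_def by (intro r'.real_distribution_distr) simp
    show "measure r A \<le> measure M A / d" if "A \<in> sets borel" for A
      using r'(2)[OF uminus_borel] measure_M'[OF uminus_borel] measure_r that
      by (simp add: image_image)
    show "measure r {t..} = min (measure M {t..}) d / d" for t
      using measure_r[of "{t..}"] r'(3)[of "-t"] measure_M'[of "{..-t}"] by simp
  qed
qed

lemma (in real_distribution) measure_lessThan_eq_compl: "measure M {..<t} = 1 - measure M {t..}"
proof -
  have "{..<t} = space M - {t..}"
    by auto
  then show ?thesis
    using prob_compl[of "{t..}"] by simp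
qed

lemma stochastically_ordered_truncations:
  assumes "real_distribution p" "real_distribution q" and d: "0 < d" "d \<le> 1"
    and tail: "\<And>t. measure p {t..} - measure q {t..} \<le> 1 - d"
  obtains rp rq where "real_distribution rp" "\<And>A. A \<in> sets borel \<Longrightarrow> measure rp A \<le> measure p A / d"
    "real_distribution rq" "\<And>A. A \<in> sets borel \<Longrightarrow> measure rq A \<le> measure q A / d"
    "\<And>t. measure rq {..t} \<le> measure rp {..t}"
proof -
  interpret p: real_distribution p by fact
  interpret q: real_distribution q by fact
  obtain rp where rp: "real_distribution rp" "\<And>A. A \<in> sets borel \<Longrightarrow> measure rp A \<le> measure p A / d"
    "\<And>t. measure rp {..<t} = min (measure p {..<t}) d / d"
    using p.lower_truncation[OF d] by metis
  obtain rq where rq: "real_distribution rq" "\<And>A. A \<in> sets borel \<Longrightarrow> measure rq A \<le> measure q A / d"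
    "\<And>t. measure rq {t..} = min (measure q {t..}) d / d"
    using q.upper_truncation[OF d] by metis
  interpret rp: real_distribution rp by fact
  interpret rq: real_distribution rq by fact
  have "measure rq {..<t} \<le> measure rp {..<t}" for t
  proof -
    have "d - min (measure q {t..}) d \<le> min (measure p {..<t}) d"
      using tail[of t] p.measure_lessThan_eq_compl[of t] d measure_nonneg[of q "{t..}"]
      by (auto simp: min_def)
    then have "(d - min (measure q {t..}) d) / d \<le> min (measure p {..<t}) d / d"
      using d by (intro divide_right_mono) auto
    then show ?thesis
      using d rp(3) rq(3) rq.measure_lessThan_eq_compl[of t] by (simp add: diff_divide_distrib)
  qed
  then have "measure rq {..t} \<le> measure rp {..t}" for t
    using atMost_le_iff_lessThan_le[OF rp.finite_borel_measure_axioms rq.finite_borel_measure_axioms] by blast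
  with rp(1,2) rq(1,2) show ?thesis
    using that by blast
qed

lemma abs_measure_diff_le_SUP:
  assumes "prob_space p" "prob_space q"
  shows "\<bar>measure p (A t) - measure q (A t)\<bar> \<le> (SUP s. \<bar>measure p (A s) - measure q (A s)\<bar>)"
proof (intro cSUP_upper bdd_aboveI2)
  fix s
  show "\<bar>measure p (A s) - measure q (A s)\<bar> \<le> 1"
    using prob_space.prob_le_1[OF assms(1), of "A s"] prob_space.prob_le_1[OF assms(2), of "A s"]
      measure_nonneg[of p "A s"] measure_nonneg[of q "A s"] by (intro abs_leI) linarith+
qed simp

lemma real_distr_iff: "real_distr M \<longleftrightarrow> real_distribution M"
  by (simp add: real_distr_def real_distribution_def real_distribution_axioms_def)

theorem lemma3p6:
  fixes p q :: "real measure" and eps :: real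
  assumes "real_distr p" and "real_distr q"
    and "0 \<le> eps" and "eps < 1"
    and "(SUP t. \<bar>measure p {t..} - measure q {t..}\<bar>) \<le> eps"
  shows "\<exists>rp rq. scaled_le rp p eps \<and> scaled_le rq q eps \<and>
           (\<forall>t. measure rp {..t} \<ge> measure rq {..t}) \<and>
           (integrable rp (\<lambda>x. x) \<and> integrable rq (\<lambda>x. x) \<longrightarrow>
              (\<integral>x. x \<partial>rp) \<le> (\<integral>x. x \<partial>rq))"
proof -
  have p: "real_distribution p" and q: "real_distribution q"
    using assms(1,2) by (simp_all add: real_distr_iff)
  have tail: "measure p {t..} - measure q {t..} \<le> eps" for t
    using abs_measure_diff_le_SUP[OF real_distribution.axioms(1)[OF p] real_distribution.axioms(1)[OF q],
        of "\<lambda>s. {s..}" t] assms(5)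
    by (simp add: abs_le_iff)
  obtain rp rq where rp: "real_distribution rp" "\<And>A. A \<in> sets borel \<Longrightarrow> measure rp A \<le> measure p A / (1 - eps)"
    and rq: "real_distribution rq" "\<And>A. A \<in> sets borel \<Longrightarrow> measure rq A \<le> measure q A / (1 - eps)"
    and dom: "\<And>t. measure rq {..t} \<le> measure rp {..t}"
    using stochastically_ordered_truncations[OF p q, of "1 - eps"] tail assms(3,4) by auto
  have "scaled_le rp p eps" "scaled_le rq q eps"
    using rp rq by (simp_all add: scaled_le_def real_distr_iff)
  then show ?thesis
    using dom integral_mono_stochastic_dominance[OF rp(1) rq(1) dom] by blast
qed

end
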